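(* Let $N\ge1$, $K\ge1$, $n_v\ge0$. Let $\mathbf{T}^{(1)},\mathbf{T}^{(2)}\in[0,1]^{K\times K}$ be irreducible aperiodic row-stochastic matrices, let $\mathbf{P}_1,\mathbf{P}_2$ be the corresponding global transition matrices and $\pi_1,\pi_2$ their stationary distributions (row vectors in $\mathbb{R}^{K^N}$). Then $\|\mathbf{P}_1-\mathbf{P}_2\|_1\le NK^{N-1}\min\{\|\mathbf{T}^{(1)}-\mathbf{T}^{(2)}\|_1,\;K\|\mathbf{T}^{(1)}-\mathbf{T}^{(2)}\|_{1,1}\}$ and $\|\mathbf{P}_1-\mathbf{P}_2\|_2\le N(KC_K)^{N/2}\|\mathbf{T}^{(1)}-\mathbf{T}^{(2)}\|_2$, where $C_K:=\max\{\max_{j\in[K]}\sum_{k\in[K]}(\mathbf{T}^{(1)}_{j,k})^2,\max_{j\in[K]}\sum_{k\in[K]}(\mathbf{T}^{(2)}_{j,k})^2\}\le1$. Also, there exists $\ell_0\in\mathbb{N}$ such that $\tau(\mathbf{P}_1^{\ell_0})<1$ and $\|\pi_1-\pi_2\|_1\le\frac{1+(\ell_0-1)K^N}{1-\tau(\mathbf{P}_1^{\ell_0})}\|\mathbf{P}_1-\mathbf{P}_2\|_1\le\frac{1+(\ell_0-1)K^N}{1-\tau(\mathbf{P}_1^{\ell_0})}NK^{N-1}\min\{\|\mathbf{T}^{(1)}-\mathbf{T}^{(2)}\|_1,\;K\|\mathbf{T}^{(1)}-\mathbf{T}^{(2)}\|_{1,1}\}$.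
   Context: Vertices $[N]=\{1,\dots,N\}$ are arranged on a cycle; for $n\in[N]$, $V_n\subset[N]$ is the set of residues modulo $N$ of $n-n_v,\dots,n+n_v$, and $|V_n|$ its cardinality. The global transition matrix associated with a row-stochastic $\mathbf{T}$ is $\mathbf{P}(x,y)=\prod_{n=1}^N \frac{1}{|V_n|}\sum_{i\in V_n}\mathbf{T}_{x_i,y_n}$, $x,y\in[K]^N$. For a matrix $\mathbf{A}$, $\|\mathbf{A}\|_p=(\sum_{i,j}|\mathbf{A}_{ij}|^p)^{1/p}$ (entrywise $\ell_p$ norm, also for vectors), and $\|\mathbf{A}\|_{1,1}=\sup_{\|\varphi\|_1\le1}\|\varphi\mathbf{A}\|_1$, the supremum over row vectors $\varphi$. For a stochastic matrix $\mathbf{A}$, $\tau(\mathbf{A}):=\frac12\max_{x,x'}\|\mathbf{A}(x,\cdot)-\mathbf{A}(x',\cdot)\|_1$. *)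

theory Defs
  imports Complex_Main "HOL-Library.FuncSet"
begin

text \<open>Vertices are [N] = {1..N}, states are [K] = {1..K}. Matrices indexed by a finite
  set S are functions of two arguments; only their values on S matter.\<close>

text \<open>V_n: residues mod N (represented in {1..N}) of n - n_v, ..., n + n_v.\<close>
definition cyc_nbhd :: "nat \<Rightarrow> nat \<Rightarrow> nat \<Rightarrow> nat set" where
  "cyc_nbhd N nv n = {nat ((int n + d - 1) mod int N) + 1 | d. d \<in> {- int nv .. int nv}}"

definition configs :: "nat \<Rightarrow> nat \<Rightarrow> (nat \<Rightarrow> nat) set" where
  "configs N K = PiE {1..N} (\<lambda>_. {1..K})"

definition global_P :: "nat \<Rightarrow> nat \<Rightarrow> (nat \<Rightarrow> nat \<Rightarrow> real) \<Rightarrow> (nat \<Rightarrow> nat) \<Rightarrow> (nat \<Rightarrow> nat) \<Rightarrow> real" where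
  "global_P N nv T x y =
     (\<Prod>n\<in>{1..N}. (1 / real (card (cyc_nbhd N nv n))) * (\<Sum>i\<in>cyc_nbhd N nv n. T (x i) (y n)))"

primrec matpow :: "'a set \<Rightarrow> ('a \<Rightarrow> 'a \<Rightarrow> real) \<Rightarrow> nat \<Rightarrow> 'a \<Rightarrow> 'a \<Rightarrow> real" where
  "matpow S A 0 = (\<lambda>i j. if i = j then 1 else 0)"
| "matpow S A (Suc m) = (\<lambda>i j. \<Sum>k\<in>S. matpow S A m i k * A k j)"

definition row_stochastic :: "'a set \<Rightarrow> ('a \<Rightarrow> 'a \<Rightarrow> real) \<Rightarrow> bool" where
  "row_stochastic S A \<longleftrightarrow> (\<forall>i\<in>S. \<forall>j\<in>S. 0 \<le> A i j \<and> A i j \<le> 1) \<and> (\<forall>i\<in>S. (\<Sum>j\<in>S. A i j) = 1)"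

definition irreducible_mat :: "'a set \<Rightarrow> ('a \<Rightarrow> 'a \<Rightarrow> real) \<Rightarrow> bool" where
  "irreducible_mat S A \<longleftrightarrow> (\<forall>i\<in>S. \<forall>j\<in>S. \<exists>m. matpow S A m i j > 0)"

definition aperiodic_mat :: "'a set \<Rightarrow> ('a \<Rightarrow> 'a \<Rightarrow> real) \<Rightarrow> bool" where
  "aperiodic_mat S A \<longleftrightarrow> (\<forall>i\<in>S. Gcd {m::nat. 0 < m \<and> matpow S A m i i > 0} = 1)"

definition stationary :: "'a set \<Rightarrow> ('a \<Rightarrow> 'a \<Rightarrow> real) \<Rightarrow> ('a \<Rightarrow> real) \<Rightarrow> bool" where
  "stationary S A p \<longleftrightarrow> (\<forall>x\<in>S. 0 \<le> p x) \<and> (\<Sum>x\<in>S. p x) = 1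
      \<and> (\<forall>y\<in>S. (\<Sum>x\<in>S. p x * A x y) = p y)"

definition ent_norm1 :: "'a set \<Rightarrow> ('a \<Rightarrow> 'a \<Rightarrow> real) \<Rightarrow> real" where
  "ent_norm1 S A = (\<Sum>i\<in>S. \<Sum>j\<in>S. \<bar>A i j\<bar>)"

definition ent_norm2 :: "'a set \<Rightarrow> ('a \<Rightarrow> 'a \<Rightarrow> real) \<Rightarrow> real" where
  "ent_norm2 S A = sqrt (\<Sum>i\<in>S. \<Sum>j\<in>S. (A i j)\<^sup>2)"

definition vec_norm1 :: "'a set \<Rightarrow> ('a \<Rightarrow> real) \<Rightarrow> real" where
  "vec_norm1 S v = (\<Sum>i\<in>S. \<bar>v i\<bar>)"

definition norm11 :: "'a set \<Rightarrow> ('a \<Rightarrow> 'a \<Rightarrow> real) \<Rightarrow> real" where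
  "norm11 S A = Sup {(\<Sum>j\<in>S. \<bar>\<Sum>i\<in>S. phi i * A i j\<bar>) | phi. (\<Sum>i\<in>S. \<bar>phi i\<bar>) \<le> 1}"

definition dob_tau :: "'a set \<Rightarrow> ('a \<Rightarrow> 'a \<Rightarrow> real) \<Rightarrow> real" where
  "dob_tau S A = (1/2) * Max {(\<Sum>j\<in>S. \<bar>A x j - A x' j\<bar>) | x x'. x \<in> S \<and> x' \<in> S}"

end

theory Submission
  imports Defs "HOL-Analysis.Convex" "HOL-Analysis.L2_Norm"
begin

(* Row x of the global matrix is the product measure on [K]^N whose n-th factor is the average
   of the rows T(x_i, .) over the sites i in V_n. The l1 distance of two product probability
   measures is at most the sum of the l1 distances of their factors, and the l2 distance obeys
   the same bound up to the factor C_K^((N-1)/2); summing over the rows x, every entry of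
   T1 - T2 is counted N K^(N-1) times.
   For the stationary distributions, pi1 - pi2 = (pi1 - pi2) P1^l + (pi2 P1^l - pi2 P2^l): the
   first term contracts by the Dobrushin coefficient tau(P1^l) and the second has l1 norm at
   most l ||P1 - P2||_1. Irreducibility and aperiodicity give a power T1^l with a positive
   column, hence P1^l has a positive column as well, and so tau(P1^l) < 1. *)

section \<open>Numerical semigroups\<close>

lemma add_closed_mult_mem:
  fixes A :: "nat set"
  assumes add: "\<And>a b. a \<in> A \<Longrightarrow> b \<in> A \<Longrightarrow> a + b \<in> A" and a: "a \<in> A" and k: "1 \<le> k"
  shows "k * a \<in> A"
  using k
proof (induction k rule: dec_induct)
  case base
  then show ?case using a by simp
next
  case (step k)
  then show ?case using add[OF step.IH a] by (simp add: add.commute)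
qed

lemma add_closed_consecutive_eventually:
  fixes A :: "nat set"
  assumes add: "\<And>a b. a \<in> A \<Longrightarrow> b \<in> A \<Longrightarrow> a + b \<in> A"
    and b: "b \<in> A" "Suc b \<in> A" "0 < b" and m: "b * b \<le> m"
  shows "m \<in> A"
proof -
  define q r where "q = m div b" and "r = m mod b"
  have "r < b" unfolding r_def using b(3) by simp
  moreover have "b \<le> q" unfolding q_def using div_le_mono[OF m, of b] b(3) by simp
  ultimately have m_eq: "m = (q - r) * b + r * Suc b"
    unfolding q_def r_def by (simp add: algebra_simps diff_mult_distrib)
  have "(q - r) * b \<in> A" using add_closed_mult_mem[OF add b(1)] \<open>r < b\<close> \<open>b \<le> q\<close> by simp
  moreover have "r * Suc b \<in> A" if "r \<noteq> 0" using add_closed_mult_mem[OF add b(2)] that by simp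
  ultimately show ?thesis using m_eq add by (cases "r = 0") auto
qed

(* The least positive element or gap d of A divides every element of A, so d = Gcd A = 1. *)
lemma add_closed_Gcd_1_consecutive:
  fixes A :: "nat set"
  assumes pos: "\<And>a. a \<in> A \<Longrightarrow> 0 < a"
    and add: "\<And>a b. a \<in> A \<Longrightarrow> b \<in> A \<Longrightarrow> a + b \<in> A"
    and gcd: "Gcd A = 1"
  shows "1 \<in> A \<or> (\<exists>b\<in>A. Suc b \<in> A)"
proof -
  define D where "D = {d. 0 < d \<and> (d \<in> A \<or> (\<exists>b\<in>A. b + d \<in> A))}"
  obtain a0 where "a0 \<in> A" using gcd by fastforce
  then have "a0 \<in> D" using pos unfolding D_def by auto
  define d where "d = (LEAST d. d \<in> D)"
  have dD: "d \<in> D" unfolding d_def using \<open>a0 \<in> D\<close> by (rule LeastI)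
  have d_le: "d \<le> e" if "e \<in> D" for e unfolding d_def using that by (rule Least_le)
  have "d dvd a" if a: "a \<in> A" for a
  proof (rule ccontr)
    assume "\<not> d dvd a"
    define q r where "q = a div d" and "r = a mod d"
    have r: "0 < r" "r < d" "a = q * d + r"
      using \<open>\<not> d dvd a\<close> dD unfolding q_def r_def D_def by (auto simp: dvd_eq_mod_eq_0)
    have "r \<in> D"
    proof (cases "q = 0")
      case True
      then show ?thesis using a r unfolding D_def by auto
    next
      case False
      from dD consider "d \<in> A" | b where "b \<in> A" "b + d \<in> A" unfolding D_def by auto
      then show ?thesis
      proof cases
        case 1
        then have "q * d \<in> A" using add_closed_mult_mem[OF add] False by simp
        then show ?thesis using a r unfolding D_def by auto
      next
        case 2
        have "q * (b + d) \<in> A" "a + q * b \<in> A"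
          using add_closed_mult_mem[OF add] 2 False add a by auto
        moreover have "a + q * b = q * (b + d) + r" using r(3) by (simp add: algebra_simps)
        ultimately show ?thesis using r unfolding D_def by (metis (mono_tags) mem_Collect_eq)
      qed
    qed
    then show False using d_le r(2) by fastforce
  qed
  then have "d = 1" using gcd by (metis Gcd_greatest nat_dvd_1_iff_1)
  then show ?thesis using dD unfolding D_def by auto
qed

lemma add_closed_Gcd_1_eventually:
  fixes A :: "nat set"
  assumes pos: "\<And>a. a \<in> A \<Longrightarrow> 0 < a"
    and add: "\<And>a b. a \<in> A \<Longrightarrow> b \<in> A \<Longrightarrow> a + b \<in> A"
    and gcd: "Gcd A = 1"
  shows "\<exists>M. \<forall>m\<ge>M. m \<in> A"
  using add_closed_Gcd_1_consecutive[OF pos add gcd]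
proof
  assume "1 \<in> A"
  then show ?thesis using add_closed_mult_mem[OF add, of 1] by (metis mult.right_neutral)
next
  assume "\<exists>b\<in>A. Suc b \<in> A"
  then show ?thesis using add_closed_consecutive_eventually[OF add] pos by blast
qed

section \<open>Powers of nonnegative matrices\<close>

lemma matpow_nonneg:
  assumes "\<And>i j. i \<in> S \<Longrightarrow> j \<in> S \<Longrightarrow> 0 \<le> A i j" and "j \<in> S"
  shows "0 \<le> matpow S A m i j"
  using assms(2) by (induction m arbitrary: j) (auto intro!: sum_nonneg mult_nonneg_nonneg assms(1))

lemma matpow_add:
  assumes "finite S" and "j \<in> S"
  shows "matpow S A (m + n) i j = (\<Sum>k\<in>S. matpow S A m i k * matpow S A n k j)"
  using assms(2)
proof (induction n arbitrary: j)
  case 0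
  then show ?case using assms(1) by (simp add: if_distrib cong: if_cong)
next
  case (Suc n)
  have "matpow S A (m + Suc n) i j = (\<Sum>l\<in>S. (\<Sum>k\<in>S. matpow S A m i k * matpow S A n k l) * A l j)"
    using Suc.IH by simp
  also have "\<dots> = (\<Sum>k\<in>S. matpow S A m i k * matpow S A (Suc n) k j)"
    by (simp add: sum_distrib_left sum_distrib_right mult.assoc) (rule sum.swap)
  finally show ?case .
qed

lemma matpow_add_pos:
  assumes fin: "finite S" and nonneg: "\<And>i j. i \<in> S \<Longrightarrow> j \<in> S \<Longrightarrow> 0 \<le> A i j"
    and "k \<in> S" "j \<in> S" "0 < matpow S A m i k" "0 < matpow S A n k j"
  shows "0 < matpow S A (m + n) i j"
proof -
  have "0 < matpow S A m i k * matpow S A n k j" using assms by simp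
  also have "\<dots> \<le> (\<Sum>k'\<in>S. matpow S A m i k' * matpow S A n k' j)"
    using assms matpow_nonneg[of S A, OF nonneg] by (intro member_le_sum) auto
  also have "\<dots> = matpow S A (m + n) i j" using matpow_add[OF fin \<open>j \<in> S\<close>] by simp
  finally show ?thesis .
qed

lemma matpow_Suc_pos_iff:
  assumes fin: "finite S" and nonneg: "\<And>i j. i \<in> S \<Longrightarrow> j \<in> S \<Longrightarrow> 0 \<le> A i j" and "j \<in> S"
  shows "0 < matpow S A (Suc m) i j \<longleftrightarrow> (\<exists>k\<in>S. 0 < matpow S A m i k \<and> 0 < A k j)"
proof -
  have terms: "0 \<le> matpow S A m i k * A k j" if "k \<in> S" for k
    using that assms matpow_nonneg[of S A, OF nonneg] by simp
  have "0 < matpow S A (Suc m) i j \<longleftrightarrow> (\<exists>k\<in>S. matpow S A m i k * A k j \<noteq> 0)"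
    using sum_nonneg_eq_0_iff[of S "\<lambda>k. matpow S A m i k * A k j"] sum_nonneg[of S "\<lambda>k. matpow S A m i k * A k j"]
      fin terms by (auto simp: less_le)
  also have "\<dots> \<longleftrightarrow> (\<exists>k\<in>S. 0 < matpow S A m i k \<and> 0 < A k j)"
    using assms matpow_nonneg[of S A, OF nonneg] by (auto simp: less_le)
  finally show ?thesis .
qed

lemma row_stochasticI:
  assumes fin: "finite S" and nonneg: "\<And>i j. i \<in> S \<Longrightarrow> j \<in> S \<Longrightarrow> 0 \<le> A i j"
    and rows: "\<And>i. i \<in> S \<Longrightarrow> (\<Sum>j\<in>S. A i j) = 1"
  shows "row_stochastic S A"
  unfolding row_stochastic_def
  using assms member_le_sum[of _ S "A _"] by (metis DiffD1)

lemma row_stochastic_matpow: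
  assumes fin: "finite S" and A: "row_stochastic S A"
  shows "row_stochastic S (matpow S A m)"
proof (rule row_stochasticI[OF fin])
  have nonneg: "\<And>i j. i \<in> S \<Longrightarrow> j \<in> S \<Longrightarrow> 0 \<le> A i j" using A unfolding row_stochastic_def by blast
  then show "\<And>i j. j \<in> S \<Longrightarrow> 0 \<le> matpow S A m i j" by (rule matpow_nonneg)
  show "(\<Sum>j\<in>S. matpow S A m i j) = 1" if "i \<in> S" for i
  proof (induction m)
    case 0
    then show ?case using fin that by simp
  next
    case (Suc m)
    have "(\<Sum>j\<in>S. matpow S A (Suc m) i j) = (\<Sum>k\<in>S. matpow S A m i k * (\<Sum>j\<in>S. A k j))"
      by (simp add: sum_distrib_left) (rule sum.swap)
    then show ?case using Suc A unfolding row_stochastic_def by simp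
  qed
qed

lemma matpow_column_pos:
  assumes fin: "finite S" and nonneg: "\<And>i j. i \<in> S \<Longrightarrow> j \<in> S \<Longrightarrow> 0 \<le> A i j"
    and irr: "irreducible_mat S A" and ap: "aperiodic_mat S A" and j: "j \<in> S"
  shows "\<exists>l\<ge>1. \<forall>i\<in>S. 0 < matpow S A l i j"
proof -
  define R where "R = {m. 0 < m \<and> 0 < matpow S A m j j}"
  have "\<And>a. a \<in> R \<Longrightarrow> 0 < a" unfolding R_def by simp
  moreover have "\<And>a b. a \<in> R \<Longrightarrow> b \<in> R \<Longrightarrow> a + b \<in> R"
    unfolding R_def using matpow_add_pos[of S A, OF fin nonneg j j] by simp
  moreover have "Gcd R = 1" using ap j unfolding aperiodic_mat_def R_def by blast
  ultimately have "\<exists>M. \<forall>m\<ge>M. m \<in> R" by (rule add_closed_Gcd_1_eventually)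
  then obtain M where M: "\<And>m. M \<le> m \<Longrightarrow> 0 < matpow S A m j j" unfolding R_def by blast
  have "\<forall>i\<in>S. \<exists>m. 0 < matpow S A m i j" using irr j unfolding irreducible_mat_def by blast
  from bchoice[OF this] obtain f where f: "\<forall>i\<in>S. 0 < matpow S A (f i) i j" by blast
  define l where "l = Max (f ` S) + M + 1"
  have "0 < matpow S A l i j" if i: "i \<in> S" for i
  proof -
    have "f i \<le> Max (f ` S)" using fin i by simp
    then have "l = f i + (l - f i)" and "M \<le> l - f i" unfolding l_def by auto
    then show ?thesis
      using matpow_add_pos[of S A, OF fin nonneg j j] f i M by metis
  qed
  moreover have "1 \<le> l" unfolding l_def by simp
  ultimately show ?thesis by blast
qed

section \<open>Stationary distributions and the Dobrushin coefficient\<close>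

lemma stationary_matpow:
  assumes fin: "finite S" and p: "stationary S A p" and y: "y \<in> S"
  shows "(\<Sum>x\<in>S. p x * matpow S A m x y) = p y"
  using y
proof (induction m arbitrary: y)
  case 0
  then show ?case using fin by (simp add: if_distrib cong: if_cong)
next
  case (Suc m)
  have "(\<Sum>x\<in>S. p x * matpow S A (Suc m) x y) = (\<Sum>k\<in>S. (\<Sum>x\<in>S. p x * matpow S A m x k) * A k y)"
    by (simp add: sum_distrib_left sum_distrib_right mult.assoc) (rule sum.swap)
  also have "\<dots> = p y" using Suc p unfolding stationary_def by simp
  finally show ?case .
qed

lemma stationary_le_1:
  assumes "finite S" "stationary S A p" "x \<in> S"
  shows "p x \<le> 1"
  using assms member_le_sum[of x S p] unfolding stationary_def by fastforce

lemma vec_norm1_mult_diff_le: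
  assumes fin: "finite S" and A: "row_stochastic S A"
    and p: "\<And>x. x \<in> S \<Longrightarrow> 0 \<le> p x \<and> p x \<le> 1"
  shows "vec_norm1 S (\<lambda>y. (\<Sum>x\<in>S. w x * A x y) - (\<Sum>x\<in>S. p x * B x y))
    \<le> vec_norm1 S (\<lambda>x. w x - p x) + ent_norm1 S (\<lambda>x y. A x y - B x y)"
proof -
  have A_nonneg: "0 \<le> A x y" if "x \<in> S" "y \<in> S" for x y using A that unfolding row_stochastic_def by blast
  have "\<bar>(\<Sum>x\<in>S. w x * A x y) - (\<Sum>x\<in>S. p x * B x y)\<bar>
      \<le> (\<Sum>x\<in>S. \<bar>w x - p x\<bar> * A x y) + (\<Sum>x\<in>S. \<bar>A x y - B x y\<bar>)" if y: "y \<in> S" for y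
  proof -
    have "(\<Sum>x\<in>S. w x * A x y) - (\<Sum>x\<in>S. p x * B x y)
        = (\<Sum>x\<in>S. (w x - p x) * A x y + p x * (A x y - B x y))"
      by (simp add: algebra_simps sum_subtractf sum.distrib)
    also have "\<bar>\<dots>\<bar> \<le> (\<Sum>x\<in>S. \<bar>w x - p x\<bar> * A x y + \<bar>A x y - B x y\<bar>)"
    proof (rule order_trans[OF sum_abs sum_mono])
      fix x assume "x \<in> S"
      then show "\<bar>(w x - p x) * A x y + p x * (A x y - B x y)\<bar> \<le> \<bar>w x - p x\<bar> * A x y + \<bar>A x y - B x y\<bar>"
        using p[of x] A_nonneg[of x y] y
        by (auto simp: abs_mult intro!: order_trans[OF abs_triangle_ineq] mult_left_le_one_le)
    qed
    finally show ?thesis by (simp add: sum.distrib)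
  qed
  then have "vec_norm1 S (\<lambda>y. (\<Sum>x\<in>S. w x * A x y) - (\<Sum>x\<in>S. p x * B x y))
      \<le> (\<Sum>y\<in>S. \<Sum>x\<in>S. \<bar>w x - p x\<bar> * A x y) + (\<Sum>y\<in>S. \<Sum>x\<in>S. \<bar>A x y - B x y\<bar>)"
    unfolding vec_norm1_def by (simp add: sum_mono flip: sum.distrib)
  also have "\<dots> = vec_norm1 S (\<lambda>x. w x - p x) + ent_norm1 S (\<lambda>x y. A x y - B x y)"
  proof -
    have "(\<Sum>y\<in>S. \<Sum>x\<in>S. \<bar>w x - p x\<bar> * A x y) = (\<Sum>x\<in>S. \<bar>w x - p x\<bar> * (\<Sum>y\<in>S. A x y))"
      by (subst sum.swap) (simp add: sum_distrib_left)
    moreover have "(\<Sum>y\<in>S. \<Sum>x\<in>S. \<bar>A x y - B x y\<bar>) = ent_norm1 S (\<lambda>x y. A x y - B x y)"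
      unfolding ent_norm1_def by (rule sum.swap)
    ultimately show ?thesis using A unfolding vec_norm1_def row_stochastic_def by simp
  qed
  finally show ?thesis .
qed

lemma vec_norm1_stationary_matpow_le:
  assumes fin: "finite S" and A: "row_stochastic S A" and q: "stationary S B q"
  shows "vec_norm1 S (\<lambda>y. (\<Sum>x\<in>S. q x * matpow S A m x y) - q y)
    \<le> real m * ent_norm1 S (\<lambda>x y. A x y - B x y)"
proof (induction m)
  case 0
  then show ?case using fin by (simp add: vec_norm1_def if_distrib cong: if_cong)
next
  case (Suc m)
  have q_bounds: "0 \<le> q x \<and> q x \<le> 1" if "x \<in> S" for x
    using q stationary_le_1[OF fin q that] that unfolding stationary_def by blast
  have "(\<Sum>x\<in>S. q x * matpow S A (Suc m) x y) - q y
      = (\<Sum>k\<in>S. (\<Sum>x\<in>S. q x * matpow S A m x k) * A k y) - (\<Sum>k\<in>S. q k * B k y)" if "y \<in> S" for y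
  proof -
    have "(\<Sum>x\<in>S. q x * matpow S A (Suc m) x y) = (\<Sum>k\<in>S. (\<Sum>x\<in>S. q x * matpow S A m x k) * A k y)"
      by (simp add: sum_distrib_left sum_distrib_right mult.assoc) (rule sum.swap)
    then show ?thesis using q that unfolding stationary_def by simp
  qed
  then have "vec_norm1 S (\<lambda>y. (\<Sum>x\<in>S. q x * matpow S A (Suc m) x y) - q y)
      \<le> vec_norm1 S (\<lambda>y. (\<Sum>x\<in>S. q x * matpow S A m x y) - q y) + ent_norm1 S (\<lambda>x y. A x y - B x y)"
    using vec_norm1_mult_diff_le[OF fin A q_bounds] unfolding vec_norm1_def by simp
  then show ?case using Suc by (simp add: algebra_simps)
qed

lemma row_diff_le_dob_tau:
  assumes "finite S" "x \<in> S" "x' \<in> S"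
  shows "(\<Sum>j\<in>S. \<bar>A x j - A x' j\<bar>) \<le> 2 * dob_tau S A"
proof -
  have "finite {(\<Sum>j\<in>S. \<bar>A x j - A x' j\<bar>) | x x'. x \<in> S \<and> x' \<in> S}"
    using assms(1) by (intro finite_image_set2) auto
  then show ?thesis unfolding dob_tau_def using assms(2,3) by (auto intro: Max_ge)
qed

lemma dob_tau_less_1:
  assumes fin: "finite S" and A: "row_stochastic S A"
    and j: "j \<in> S" and pos: "\<And>x. x \<in> S \<Longrightarrow> 0 < A x j"
  shows "dob_tau S A < 1"
proof -
  let ?Z = "{(\<Sum>j\<in>S. \<bar>A x j - A x' j\<bar>) | x x'. x \<in> S \<and> x' \<in> S}"
  have "z < 2" if "z \<in> ?Z" for z
  proof -
    obtain x x' where z: "z = (\<Sum>j\<in>S. \<bar>A x j - A x' j\<bar>)" and x: "x \<in> S" "x' \<in> S"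
      using \<open>z \<in> ?Z\<close> by auto
    have "z = (\<Sum>j\<in>S. A x j + A x' j - 2 * min (A x j) (A x' j))"
      unfolding z by (intro sum.cong) auto
    also have "\<dots> = 2 - 2 * (\<Sum>j\<in>S. min (A x j) (A x' j))"
      using A x unfolding row_stochastic_def by (simp add: sum.distrib sum_subtractf sum_distrib_left)
    also have "\<dots> < 2"
    proof -
      have "0 < min (A x j) (A x' j)" using pos x by simp
      also have "\<dots> \<le> (\<Sum>j\<in>S. min (A x j) (A x' j))"
        using fin j A x unfolding row_stochastic_def by (intro member_le_sum) auto
      finally show ?thesis by simp
    qed
    finally show ?thesis .
  qed
  moreover have "finite ?Z" "?Z \<noteq> {}" using fin j by (auto intro: finite_image_set2)
  ultimately show ?thesis unfolding dob_tau_def by simp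
qed

lemma vec_norm1_sum_row_diff_le:
  assumes fin: "finite S" and w: "\<And>x x'. 0 \<le> w x x'"
  shows "vec_norm1 S (\<lambda>y. \<Sum>x\<in>S. \<Sum>x'\<in>S. w x x' * (A x y - A x' y))
    \<le> 2 * dob_tau S A * (\<Sum>x\<in>S. \<Sum>x'\<in>S. w x x')"
proof -
  have "vec_norm1 S (\<lambda>y. \<Sum>x\<in>S. \<Sum>x'\<in>S. w x x' * (A x y - A x' y))
      \<le> (\<Sum>y\<in>S. \<Sum>x\<in>S. \<Sum>x'\<in>S. w x x' * \<bar>A x y - A x' y\<bar>)"
    unfolding vec_norm1_def
  proof (rule sum_mono)
    fix y
    show "\<bar>\<Sum>x\<in>S. \<Sum>x'\<in>S. w x x' * (A x y - A x' y)\<bar> \<le> (\<Sum>x\<in>S. \<Sum>x'\<in>S. w x x' * \<bar>A x y - A x' y\<bar>)"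
      by (rule order_trans[OF sum_abs sum_mono], rule order_trans[OF sum_abs sum_mono])
        (simp add: abs_mult w)
  qed
  also have "\<dots> = (\<Sum>x\<in>S. \<Sum>x'\<in>S. w x x' * (\<Sum>y\<in>S. \<bar>A x y - A x' y\<bar>))"
    by (subst sum.swap, rule sum.cong, simp, subst sum.swap) (simp add: sum_distrib_left)
  also have "\<dots> \<le> (\<Sum>x\<in>S. \<Sum>x'\<in>S. w x x' * (2 * dob_tau S A))"
    using row_diff_le_dob_tau[OF fin] w by (intro sum_mono mult_left_mono) auto
  also have "\<dots> = 2 * dob_tau S A * (\<Sum>x\<in>S. \<Sum>x'\<in>S. w x x')"
    by (simp add: sum_distrib_left mult_ac)
  finally show ?thesis .
qed

lemma vec_norm1_mult_le_dob_tau: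
  assumes fin: "finite S" and v: "(\<Sum>x\<in>S. v x) = 0"
  shows "vec_norm1 S (\<lambda>y. \<Sum>x\<in>S. v x * A x y) \<le> dob_tau S A * vec_norm1 S v"
proof -
  define vp vm where "vp x = max (v x) 0" and "vm x = max (- v x) 0" for x
  have vpm: "v x = vp x - vm x" "\<bar>v x\<bar> = vp x + vm x" "0 \<le> vp x" "0 \<le> vm x" for x
    unfolding vp_def vm_def by auto
  define s where "s = (\<Sum>x\<in>S. vp x)"
  have s_vm: "(\<Sum>x\<in>S. vm x) = s" using v unfolding s_def vpm(1) by (simp add: sum_subtractf)
  have norm_v: "vec_norm1 S v = 2 * s" unfolding vec_norm1_def vpm(2) s_def using s_vm s_def by (simp add: sum.distrib)
  have s_nonneg: "0 \<le> s" unfolding s_def using vpm(3) by (simp add: sum_nonneg)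
  (* vp and vm have equal mass s, so s (v A) is a nonnegative combination of differences of rows of A *)
  have mixed: "s * (\<Sum>x\<in>S. v x * A x y) = (\<Sum>x\<in>S. \<Sum>x'\<in>S. vp x * vm x' * (A x y - A x' y))" for y
  proof -
    have "(\<Sum>x\<in>S. \<Sum>x'\<in>S. vp x * vm x' * (A x y - A x' y))
        = (\<Sum>x\<in>S. vp x * A x y) * (\<Sum>x'\<in>S. vm x') - (\<Sum>x\<in>S. vp x) * (\<Sum>x'\<in>S. vm x' * A x' y)"
      by (simp add: sum_product algebra_simps sum_subtractf, rule sum.swap)
    then show ?thesis unfolding vpm(1) s_vm s_def[symmetric] by (simp add: algebra_simps sum_subtractf)
  qed
  have "s * vec_norm1 S (\<lambda>y. \<Sum>x\<in>S. v x * A x y) = vec_norm1 S (\<lambda>y. s * (\<Sum>x\<in>S. v x * A x y))"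
    unfolding vec_norm1_def by (subst sum_distrib_left) (simp add: abs_mult s_nonneg)
  also have "\<dots> \<le> 2 * dob_tau S A * (\<Sum>x\<in>S. \<Sum>x'\<in>S. vp x * vm x')"
    unfolding mixed using vpm(3,4) by (intro vec_norm1_sum_row_diff_le[OF fin]) simp
  also have "\<dots> = s * (dob_tau S A * vec_norm1 S v)"
    unfolding sum_product[symmetric] s_vm s_def[symmetric] norm_v by simp
  finally have le: "s * vec_norm1 S (\<lambda>y. \<Sum>x\<in>S. v x * A x y) \<le> s * (dob_tau S A * vec_norm1 S v)" .
  show ?thesis
  proof (cases "s = 0")
    case True
    then have "v x = 0" if "x \<in> S" for x
      using that fin norm_v by (simp add: vec_norm1_def sum_nonneg_eq_0_iff)
    then show ?thesis by (simp add: vec_norm1_def)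
  next
    case False
    then show ?thesis using le s_nonneg by simp
  qed
qed

lemma vec_norm1_stationary_diff_le:
  assumes fin: "finite S" and A: "row_stochastic S A"
    and p: "stationary S A p" and q: "stationary S B q"
    and tau: "dob_tau S (matpow S A l) < 1"
  shows "vec_norm1 S (\<lambda>x. p x - q x)
    \<le> real l * ent_norm1 S (\<lambda>x y. A x y - B x y) / (1 - dob_tau S (matpow S A l))"
proof -
  let ?Al = "matpow S A l" and ?v = "\<lambda>x. p x - q x"
  have split: "p y - q y = (\<Sum>x\<in>S. ?v x * ?Al x y) + ((\<Sum>x\<in>S. q x * ?Al x y) - q y)"
    if "y \<in> S" for y
    using stationary_matpow[OF fin p that, of l] by (simp add: left_diff_distrib sum_subtractf)
  have "vec_norm1 S ?v
      \<le> vec_norm1 S (\<lambda>y. \<Sum>x\<in>S. ?v x * ?Al x y) + vec_norm1 S (\<lambda>y. (\<Sum>x\<in>S. q x * ?Al x y) - q y)"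
    unfolding vec_norm1_def sum.distrib[symmetric]
  proof (rule sum_mono)
    fix y assume "y \<in> S"
    show "\<bar>p y - q y\<bar> \<le> \<bar>\<Sum>x\<in>S. ?v x * ?Al x y\<bar> + \<bar>(\<Sum>x\<in>S. q x * ?Al x y) - q y\<bar>"
      unfolding split[OF \<open>y \<in> S\<close>] by (rule abs_triangle_ineq)
  qed
  moreover have "vec_norm1 S (\<lambda>y. \<Sum>x\<in>S. ?v x * ?Al x y) \<le> dob_tau S ?Al * vec_norm1 S ?v"
    using p q unfolding stationary_def by (intro vec_norm1_mult_le_dob_tau[OF fin]) (simp add: sum_subtractf)
  moreover have "vec_norm1 S (\<lambda>y. (\<Sum>x\<in>S. q x * ?Al x y) - q y) \<le> real l * ent_norm1 S (\<lambda>x y. A x y - B x y)"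
    by (rule vec_norm1_stationary_matpow_le[OF fin A q])
  ultimately have "(1 - dob_tau S ?Al) * vec_norm1 S ?v \<le> real l * ent_norm1 S (\<lambda>x y. A x y - B x y)"
    by (simp add: algebra_simps)
  then show ?thesis using tau by (simp add: pos_le_divide_eq mult.commute)
qed

section \<open>Matrix norms\<close>

lemma ent_norm1_le_card_norm11:
  assumes fin: "finite S"
  shows "ent_norm1 S D \<le> real (card S) * norm11 S D"
proof -
  let ?F = "\<lambda>phi. \<Sum>k\<in>S. \<bar>\<Sum>i\<in>S. phi i * D i k\<bar>"
  let ?Phi = "{?F phi | phi. (\<Sum>i\<in>S. \<bar>phi i\<bar>) \<le> 1}"
  have "?F phi \<le> (\<Sum>k\<in>S. \<Sum>i\<in>S. \<bar>D i k\<bar>)" if phi: "(\<Sum>i\<in>S. \<bar>phi i\<bar>) \<le> 1" for phi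
  proof (rule order_trans[OF sum_mono[OF sum_abs] sum_mono[OF sum_mono]])
    fix k i assume "i \<in> S"
    then have "\<bar>phi i\<bar> \<le> 1" using phi member_le_sum[of i S "\<lambda>i. \<bar>phi i\<bar>"] fin by simp
    then show "\<bar>phi i * D i k\<bar> \<le> \<bar>D i k\<bar>" by (simp add: abs_mult mult_left_le_one_le)
  qed
  then have bdd: "bdd_above ?Phi" by (intro bdd_aboveI) blast
  have "(\<Sum>k\<in>S. \<bar>D j k\<bar>) \<le> norm11 S D" if j: "j \<in> S" for j
  proof -
    define phi :: "_ \<Rightarrow> real" where "phi i = (if i = j then 1 else 0)" for i
    have "phi i * D i k = (if i = j then D j k else 0)" for i k by (simp add: phi_def)
    then have "(\<Sum>i\<in>S. \<bar>phi i\<bar>) = 1" "(\<Sum>k\<in>S. \<bar>D j k\<bar>) = ?F phi"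
      using fin j by (simp_all add: phi_def)
    then have "(\<Sum>k\<in>S. \<bar>D j k\<bar>) \<in> ?Phi" by fastforce
    then show ?thesis unfolding norm11_def by (rule cSup_upper[OF _ bdd])
  qed
  then show ?thesis unfolding ent_norm1_def using sum_mono[of S _ "\<lambda>_. norm11 S D"] by simp
qed

lemma row_stochastic_sum_sq_le_1:
  assumes T: "row_stochastic S T" and j: "j \<in> S"
  shows "(\<Sum>k\<in>S. (T j k)\<^sup>2) \<le> 1"
proof -
  have "(\<Sum>k\<in>S. (T j k)\<^sup>2) \<le> (\<Sum>k\<in>S. T j k)"
    using T j unfolding row_stochastic_def
    by (intro sum_mono) (simp add: power2_eq_square mult_left_le_one_le)
  then show ?thesis using T j unfolding row_stochastic_def by simp
qed

lemma row_stochastic_card_mult_sum_sq_ge_1: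
  assumes T: "row_stochastic S T" and j: "j \<in> S"
  shows "1 \<le> real (card S) * (\<Sum>k\<in>S. (T j k)\<^sup>2)"
proof -
  have "1 = (\<Sum>k\<in>S. T j k)\<^sup>2" using T j unfolding row_stochastic_def by simp
  also have "\<dots> \<le> real (card S) * (\<Sum>k\<in>S. (T j k)\<^sup>2)"
    using sum_squared_le_sum_of_squares[of "T j" S] by (simp add: mult.commute)
  finally show ?thesis .
qed

section \<open>Product measures\<close>

lemma sum_PiE_insert:
  assumes "n0 \<notin> I"
  shows "sum F (PiE (insert n0 I) B) = (\<Sum>k\<in>B n0. \<Sum>g\<in>PiE I B. F (g(n0 := k)))"
proof -
  have "sum F (PiE (insert n0 I) B) = sum (F \<circ> (\<lambda>(k, g). g(n0 := k))) (B n0 \<times> PiE I B)"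
    unfolding PiE_insert_eq by (rule sum.reindex[OF inj_combinator[OF assms]])
  then show ?thesis by (simp add: sum.cartesian_product split_def)
qed

lemma prod_fun_upd_insert:
  assumes "finite I" "n0 \<notin> I"
  shows "(\<Prod>n\<in>insert n0 I. a n ((g(n0 := k)) n)) = a n0 k * (\<Prod>n\<in>I. a n (g n))"
proof -
  have "(\<Prod>n\<in>I. a n ((g(n0 := k)) n)) = (\<Prod>n\<in>I. a n (g n))"
    using assms by (intro prod.cong) auto
  then show ?thesis using assms by simp
qed

lemma sum_abs_prod_PiE:
  fixes a :: "'a \<Rightarrow> 'b \<Rightarrow> real"
  assumes "finite I" "finite B"
  shows "(\<Sum>y\<in>PiE I (\<lambda>_. B). \<bar>\<Prod>n\<in>I. a n (y n)\<bar>) = (\<Prod>n\<in>I. \<Sum>k\<in>B. \<bar>a n k\<bar>)"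
proof -
  have "\<bar>\<Prod>n\<in>I. a n (y n)\<bar> = (\<Prod>n\<in>I. \<bar>a n (y n)\<bar>)" for y
    using prod_norm[of "\<lambda>n. a n (y n)" I] by simp
  then show ?thesis using prod_sum_PiE[of I "\<lambda>_. B" "\<lambda>n k. \<bar>a n k\<bar>"] assms by simp
qed

lemma sum_abs_prod_diff_PiE_le:
  fixes a b :: "'a \<Rightarrow> 'b \<Rightarrow> real"
  assumes "finite I" "finite B"
    and a: "\<And>n. n \<in> I \<Longrightarrow> (\<Sum>k\<in>B. \<bar>a n k\<bar>) \<le> 1"
    and b: "\<And>n. n \<in> I \<Longrightarrow> (\<Sum>k\<in>B. \<bar>b n k\<bar>) \<le> 1"
  shows "(\<Sum>y\<in>PiE I (\<lambda>_. B). \<bar>(\<Prod>n\<in>I. a n (y n)) - (\<Prod>n\<in>I. b n (y n))\<bar>)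
    \<le> (\<Sum>n\<in>I. \<Sum>k\<in>B. \<bar>a n k - b n k\<bar>)"
  using assms(1) a b
proof (induction I rule: finite_induct)
  case empty
  then show ?case by simp
next
  case (insert n0 I)
  let ?Y = "PiE I (\<lambda>_. B)" and ?A = "\<lambda>g. \<Prod>n\<in>I. a n (g n)" and ?B = "\<lambda>g. \<Prod>n\<in>I. b n (g n)"
  have "(\<Sum>y\<in>PiE (insert n0 I) (\<lambda>_. B). \<bar>(\<Prod>n\<in>insert n0 I. a n (y n)) - (\<Prod>n\<in>insert n0 I. b n (y n))\<bar>)
      = (\<Sum>k\<in>B. \<Sum>g\<in>?Y. \<bar>a n0 k * ?A g - b n0 k * ?B g\<bar>)"
    by (subst sum_PiE_insert[OF insert(2)]) (simp only: prod_fun_upd_insert[OF insert(1,2)])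
  also have "\<dots> \<le> (\<Sum>k\<in>B. \<Sum>g\<in>?Y. \<bar>a n0 k - b n0 k\<bar> * \<bar>?A g\<bar> + \<bar>b n0 k\<bar> * \<bar>?A g - ?B g\<bar>)"
  proof (intro sum_mono)
    fix k g
    have "a n0 k * ?A g - b n0 k * ?B g = (a n0 k - b n0 k) * ?A g + b n0 k * (?A g - ?B g)"
      by (simp add: algebra_simps)
    then show "\<bar>a n0 k * ?A g - b n0 k * ?B g\<bar> \<le> \<bar>a n0 k - b n0 k\<bar> * \<bar>?A g\<bar> + \<bar>b n0 k\<bar> * \<bar>?A g - ?B g\<bar>"
      by (metis abs_mult abs_triangle_ineq)
  qed
  also have "\<dots> = (\<Sum>k\<in>B. \<bar>a n0 k - b n0 k\<bar>) * (\<Sum>g\<in>?Y. \<bar>?A g\<bar>)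
      + (\<Sum>k\<in>B. \<bar>b n0 k\<bar>) * (\<Sum>g\<in>?Y. \<bar>?A g - ?B g\<bar>)"
    by (simp add: sum.distrib sum_product)
  also have "\<dots> \<le> (\<Sum>k\<in>B. \<bar>a n0 k - b n0 k\<bar>) * 1 + 1 * (\<Sum>n\<in>I. \<Sum>k\<in>B. \<bar>a n k - b n k\<bar>)"
    using insert \<open>finite B\<close>
    by (intro add_mono mult_mono) (auto simp: sum_abs_prod_PiE intro!: prod_le_1 prod_nonneg sum_nonneg)
  also have "\<dots> = (\<Sum>n\<in>insert n0 I. \<Sum>k\<in>B. \<bar>a n k - b n k\<bar>)"
    using insert(1,2) by simp
  finally show ?case .
qed

lemma L2_set_times:
  "L2_set (\<lambda>p. f (fst p) * g (snd p)) (A \<times> B) = L2_set f A * L2_set g B"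
proof -
  have "(\<Sum>p\<in>A \<times> B. (f (fst p) * g (snd p))\<^sup>2) = (\<Sum>x\<in>A. (f x)\<^sup>2) * (\<Sum>y\<in>B. (g y)\<^sup>2)"
    by (simp add: sum_product sum.cartesian_product split_def power_mult_distrib)
  then show ?thesis unfolding L2_set_def by (simp add: real_sqrt_mult)
qed

lemma L2_set_prod_PiE:
  fixes a :: "'a \<Rightarrow> 'b \<Rightarrow> real"
  assumes "finite I" "finite B"
  shows "L2_set (\<lambda>y. \<Prod>n\<in>I. a n (y n)) (PiE I (\<lambda>_. B)) = (\<Prod>n\<in>I. L2_set (a n) B)"
proof -
  have "sqrt (\<Prod>n\<in>I. s n) = (\<Prod>n\<in>I. sqrt (s n))" for s :: "'a \<Rightarrow> real"
    using assms(1) by (induction I rule: finite_induct) (simp_all add: real_sqrt_mult)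
  moreover have "(\<Sum>y\<in>PiE I (\<lambda>_. B). (\<Prod>n\<in>I. a n (y n))\<^sup>2) = (\<Prod>n\<in>I. \<Sum>k\<in>B. (a n k)\<^sup>2)"
    using prod_sum_PiE[of I "\<lambda>_. B" "\<lambda>n k. (a n k)\<^sup>2"] assms by (simp add: prod_power_distrib)
  ultimately show ?thesis unfolding L2_set_def by simp
qed

lemma L2_set_prod_diff_PiE_insert_le:
  fixes a b :: "'a \<Rightarrow> 'b \<Rightarrow> real"
  assumes "finite I" "n0 \<notin> I"
  shows "L2_set (\<lambda>y. (\<Prod>n\<in>insert n0 I. a n (y n)) - (\<Prod>n\<in>insert n0 I. b n (y n))) (PiE (insert n0 I) (\<lambda>_. B))
    \<le> L2_set (\<lambda>k. a n0 k - b n0 k) B * L2_set (\<lambda>y. \<Prod>n\<in>I. a n (y n)) (PiE I (\<lambda>_. B))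
      + L2_set (b n0) B * L2_set (\<lambda>y. (\<Prod>n\<in>I. a n (y n)) - (\<Prod>n\<in>I. b n (y n))) (PiE I (\<lambda>_. B))"
proof -
  let ?Y = "PiE I (\<lambda>_. B)" and ?A = "\<lambda>g. \<Prod>n\<in>I. a n (g n)" and ?B = "\<lambda>g. \<Prod>n\<in>I. b n (g n)"
  have "L2_set (\<lambda>y. (\<Prod>n\<in>insert n0 I. a n (y n)) - (\<Prod>n\<in>insert n0 I. b n (y n))) (PiE (insert n0 I) (\<lambda>_. B))
      = sqrt (\<Sum>k\<in>B. \<Sum>g\<in>?Y. (a n0 k * ?A g - b n0 k * ?B g)\<^sup>2)"
    unfolding L2_set_def
    by (subst sum_PiE_insert[OF assms(2)]) (simp only: prod_fun_upd_insert[OF assms])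
  also have "\<dots> = L2_set (\<lambda>p. (a n0 (fst p) - b n0 (fst p)) * ?A (snd p) + b n0 (fst p) * (?A (snd p) - ?B (snd p))) (B \<times> ?Y)"
    unfolding L2_set_def by (simp add: sum.cartesian_product split_def algebra_simps)
  also have "\<dots> \<le> L2_set (\<lambda>p. (a n0 (fst p) - b n0 (fst p)) * ?A (snd p)) (B \<times> ?Y)
      + L2_set (\<lambda>p. b n0 (fst p) * (?A (snd p) - ?B (snd p))) (B \<times> ?Y)"
    by (rule L2_set_triangle_ineq)
  also have "\<dots> = L2_set (\<lambda>k. a n0 k - b n0 k) B * L2_set ?A ?Y + L2_set (b n0) B * L2_set (\<lambda>g. ?A g - ?B g) ?Y"
    using L2_set_times[of "\<lambda>k. a n0 k - b n0 k" ?A B ?Y] L2_set_times[of "b n0" "\<lambda>g. ?A g - ?B g" B ?Y]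
    by simp
  finally show ?thesis .
qed

lemma L2_set_prod_diff_PiE_le:
  fixes a b :: "'a \<Rightarrow> 'b \<Rightarrow> real"
  assumes "finite I" "finite B" "0 \<le> r"
    and a: "\<And>n. n \<in> I \<Longrightarrow> L2_set (a n) B \<le> r"
    and b: "\<And>n. n \<in> I \<Longrightarrow> L2_set (b n) B \<le> r"
  shows "r * L2_set (\<lambda>y. (\<Prod>n\<in>I. a n (y n)) - (\<Prod>n\<in>I. b n (y n))) (PiE I (\<lambda>_. B))
    \<le> r ^ card I * (\<Sum>n\<in>I. L2_set (\<lambda>k. a n k - b n k) B)"
  using assms(1) a b
proof (induction I rule: finite_induct)
  case empty
  then show ?case by simp
next
  case (insert n0 I)
  let ?Y = "PiE I (\<lambda>_. B)" and ?A = "\<lambda>g. \<Prod>n\<in>I. a n (g n)" and ?B = "\<lambda>g. \<Prod>n\<in>I. b n (g n)"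
  let ?d = "L2_set (\<lambda>k. a n0 k - b n0 k) B" and ?D = "L2_set (\<lambda>g. ?A g - ?B g) ?Y"
    and ?S = "\<Sum>n\<in>I. L2_set (\<lambda>k. a n k - b n k) B"
  have "r * L2_set (\<lambda>y. (\<Prod>n\<in>insert n0 I. a n (y n)) - (\<Prod>n\<in>insert n0 I. b n (y n))) (PiE (insert n0 I) (\<lambda>_. B))
      \<le> r * (?d * L2_set ?A ?Y + L2_set (b n0) B * ?D)"
    using L2_set_prod_diff_PiE_insert_le[OF insert(1,2)] \<open>0 \<le> r\<close> by (rule mult_left_mono)
  also have "\<dots> = r * ?d * L2_set ?A ?Y + L2_set (b n0) B * (r * ?D)"
    by (simp add: algebra_simps)
  also have "\<dots> \<le> r * ?d * r ^ card I + r * (r ^ card I * ?S)"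
  proof (rule add_mono)
    have "L2_set ?A ?Y \<le> r ^ card I"
      using insert \<open>finite B\<close> \<open>0 \<le> r\<close> prod_mono[of I "\<lambda>n. L2_set (a n) B" "\<lambda>_. r"]
      by (simp add: L2_set_prod_PiE)
    then show "r * ?d * L2_set ?A ?Y \<le> r * ?d * r ^ card I"
      using \<open>0 \<le> r\<close> by (intro mult_left_mono) auto
    have "r * ?D \<le> r ^ card I * ?S" using insert by simp
    then show "L2_set (b n0) B * (r * ?D) \<le> r * (r ^ card I * ?S)"
      using insert.prems(2)[of n0] \<open>0 \<le> r\<close> by - (rule mult_mono, auto)
  qed
  also have "\<dots> = r ^ card (insert n0 I) * (\<Sum>n\<in>insert n0 I. L2_set (\<lambda>k. a n k - b n k) B)"
    using insert(1,2) by (simp add: algebra_simps)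
  finally show ?case .
qed

section \<open>Averages over finite sets\<close>

definition avg :: "'a set \<Rightarrow> ('a \<Rightarrow> real) \<Rightarrow> real" where
  "avg V g = 1 / real (card V) * (\<Sum>i\<in>V. g i)"

lemma avg_cong: "(\<And>i. i \<in> V \<Longrightarrow> g i = h i) \<Longrightarrow> avg V g = avg V h"
  unfolding avg_def by simp

lemma avg_nonneg: "(\<And>i. i \<in> V \<Longrightarrow> 0 \<le> g i) \<Longrightarrow> 0 \<le> avg V g"
  unfolding avg_def by (simp add: sum_nonneg)

lemma avg_mono: "(\<And>i. i \<in> V \<Longrightarrow> g i \<le> h i) \<Longrightarrow> avg V g \<le> avg V h"
  unfolding avg_def by (simp add: divide_right_mono sum_mono)

lemma avg_const: "finite V \<Longrightarrow> V \<noteq> {} \<Longrightarrow> avg V (\<lambda>_. c) = c"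
  unfolding avg_def by simp

lemma avg_diff: "avg V g - avg V h = avg V (\<lambda>i. g i - h i)"
  unfolding avg_def by (simp add: sum_subtractf right_diff_distrib)

lemma sum_avg: "(\<Sum>k\<in>A. avg V (g k)) = avg V (\<lambda>i. \<Sum>k\<in>A. g k i)"
  unfolding avg_def by (simp add: sum_distrib_left) (rule sum.swap)

lemma abs_avg_le: "\<bar>avg V g\<bar> \<le> avg V (\<lambda>i. \<bar>g i\<bar>)"
  unfolding avg_def by (simp add: divide_right_mono sum_abs)

lemma sq_avg_le: "(avg V g)\<^sup>2 \<le> avg V (\<lambda>i. (g i)\<^sup>2)"
  using sum_squared_le_sum_of_squares[of g V]
  by (cases "card V = 0") (simp_all add: avg_def power_divide field_simps power2_eq_square)

section \<open>The global transition matrix\<close>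

lemma finite_cyc_nbhd: "finite (cyc_nbhd N nv n)"
  unfolding cyc_nbhd_def by (rule finite_image_set) simp

lemma cyc_nbhd_subset:
  assumes "1 \<le> N"
  shows "cyc_nbhd N nv n \<subseteq> {1..N}"
proof
  fix m assume "m \<in> cyc_nbhd N nv n"
  then obtain d where m: "m = nat ((int n + d - 1) mod int N) + 1" unfolding cyc_nbhd_def by auto
  have "0 \<le> (int n + d - 1) mod int N" "(int n + d - 1) mod int N < int N" using assms by auto
  then show "m \<in> {1..N}" unfolding m by auto
qed

lemma cyc_nbhd_self:
  assumes "n \<in> {1..N}"
  shows "n \<in> cyc_nbhd N nv n"
proof -
  have "n = nat ((int n + 0 - 1) mod int N) + 1" using assms by auto
  then show ?thesis unfolding cyc_nbhd_def by fastforce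
qed

lemma finite_configs: "finite (configs N K)"
  unfolding configs_def by (simp add: finite_PiE)

lemma configs_in: "x \<in> configs N K \<Longrightarrow> i \<in> {1..N} \<Longrightarrow> x i \<in> {1..K}"
  unfolding configs_def by (auto simp: PiE_iff)

lemma configs_in_cyc_nbhd: "1 \<le> N \<Longrightarrow> x \<in> configs N K \<Longrightarrow> i \<in> cyc_nbhd N nv n \<Longrightarrow> x i \<in> {1..K}"
  using configs_in cyc_nbhd_subset by blast

lemma sum_configs_coord:
  fixes f :: "nat \<Rightarrow> real"
  assumes i: "i \<in> {1..N}"
  shows "(\<Sum>x\<in>configs N K. f (x i)) = real K ^ (N - 1) * (\<Sum>j\<in>{1..K}. f j)"
proof -
  define a where "a n k = (if n = i then f k else 1)" for n k
  have "(\<Sum>x\<in>configs N K. f (x i)) = (\<Sum>x\<in>configs N K. \<Prod>n\<in>{1..N}. a n (x n))"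
    using i by (intro sum.cong) (simp_all add: a_def prod.If_cases)
  also have "\<dots> = (\<Prod>n\<in>{1..N}. \<Sum>k\<in>{1..K}. a n k)"
    unfolding configs_def by (rule prod_sum_PiE[symmetric]) auto
  also have "\<dots> = (\<Sum>k\<in>{1..K}. a i k) * (\<Prod>n\<in>{1..N} - {i}. \<Sum>k\<in>{1..K}. a n k)"
    using i by (simp add: prod.remove)
  also have "\<dots> = (\<Sum>j\<in>{1..K}. f j) * real K ^ (N - 1)"
    using i by (simp add: a_def)
  finally show ?thesis by simp
qed

lemma sum_configs_avg_cyc_nbhd:
  fixes f :: "nat \<Rightarrow> real"
  assumes N: "1 \<le> N"
  shows "(\<Sum>x\<in>configs N K. \<Sum>n\<in>{1..N}. avg (cyc_nbhd N nv n) (\<lambda>i. f (x i)))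
    = real N * real K ^ (N - 1) * (\<Sum>j\<in>{1..K}. f j)"
proof -
  have "(\<Sum>x\<in>configs N K. \<Sum>n\<in>{1..N}. avg (cyc_nbhd N nv n) (\<lambda>i. f (x i)))
      = (\<Sum>n\<in>{1..N}. avg (cyc_nbhd N nv n) (\<lambda>i. \<Sum>x\<in>configs N K. f (x i)))"
    by (subst sum.swap) (simp add: sum_avg)
  also have "\<dots> = (\<Sum>n\<in>{1..N}. avg (cyc_nbhd N nv n) (\<lambda>_. real K ^ (N - 1) * (\<Sum>j\<in>{1..K}. f j)))"
    using cyc_nbhd_subset[OF N] by (intro sum.cong avg_cong refl sum_configs_coord) blast
  also have "\<dots> = (\<Sum>n\<in>{1..N}. real K ^ (N - 1) * (\<Sum>j\<in>{1..K}. f j))"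
    using cyc_nbhd_self by (intro sum.cong refl avg_const finite_cyc_nbhd) blast
  also have "\<dots> = real N * real K ^ (N - 1) * (\<Sum>j\<in>{1..K}. f j)"
    by simp
  finally show ?thesis .
qed

lemma global_P_eq_prod_avg:
  "global_P N nv T x y = (\<Prod>n\<in>{1..N}. avg (cyc_nbhd N nv n) (\<lambda>i. T (x i) (y n)))"
  unfolding global_P_def avg_def ..

lemma avg_row_stochastic:
  assumes N: "1 \<le> N" and T: "row_stochastic {1..K} T" and x: "x \<in> configs N K" and n: "n \<in> {1..N}"
  shows "k \<in> {1..K} \<Longrightarrow> 0 \<le> avg (cyc_nbhd N nv n) (\<lambda>i. T (x i) k)"
    and "(\<Sum>k\<in>{1..K}. avg (cyc_nbhd N nv n) (\<lambda>i. T (x i) k)) = 1"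
proof -
  have x_in: "x i \<in> {1..K}" if "i \<in> cyc_nbhd N nv n" for i
    using configs_in_cyc_nbhd[OF N x that] .
  have T_nonneg: "0 \<le> T j k" and T_rows: "(\<Sum>k\<in>{1..K}. T j k) = 1" if "j \<in> {1..K}" "k \<in> {1..K}" for j k
    using T that unfolding row_stochastic_def by auto
  show "k \<in> {1..K} \<Longrightarrow> 0 \<le> avg (cyc_nbhd N nv n) (\<lambda>i. T (x i) k)"
    using T_nonneg x_in by (intro avg_nonneg) blast
  have "(\<Sum>k\<in>{1..K}. avg (cyc_nbhd N nv n) (\<lambda>i. T (x i) k)) = avg (cyc_nbhd N nv n) (\<lambda>_. 1)"
    unfolding sum_avg using T_rows x_in by (intro avg_cong) blast
  also have "\<dots> = 1" using cyc_nbhd_self[OF n] by (intro avg_const finite_cyc_nbhd) blast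
  finally show "(\<Sum>k\<in>{1..K}. avg (cyc_nbhd N nv n) (\<lambda>i. T (x i) k)) = 1" .
qed

lemma row_stochastic_global_P:
  assumes N: "1 \<le> N" and T: "row_stochastic {1..K} T"
  shows "row_stochastic (configs N K) (global_P N nv T)"
proof (rule row_stochasticI[OF finite_configs])
  show "0 \<le> global_P N nv T x y" if "x \<in> configs N K" "y \<in> configs N K" for x y
    unfolding global_P_eq_prod_avg
    using avg_row_stochastic(1)[OF N T that(1)] configs_in[OF that(2)] by (intro prod_nonneg) blast
  show "(\<Sum>y\<in>configs N K. global_P N nv T x y) = 1" if "x \<in> configs N K" for x
    unfolding global_P_eq_prod_avg configs_def
    using prod_sum_PiE[of "{1..N}" "\<lambda>_. {1..K}" "\<lambda>n k. avg (cyc_nbhd N nv n) (\<lambda>i. T (x i) k)"]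
      avg_row_stochastic(2)[OF N T that] by simp
qed

lemma sum_abs_global_P_diff_le:
  assumes N: "1 \<le> N" and T1: "row_stochastic {1..K} T1" and T2: "row_stochastic {1..K} T2"
    and x: "x \<in> configs N K"
  shows "(\<Sum>y\<in>configs N K. \<bar>global_P N nv T1 x y - global_P N nv T2 x y\<bar>)
    \<le> (\<Sum>n\<in>{1..N}. avg (cyc_nbhd N nv n) (\<lambda>i. \<Sum>k\<in>{1..K}. \<bar>T1 (x i) k - T2 (x i) k\<bar>))"
proof -
  let ?a = "\<lambda>T n k. avg (cyc_nbhd N nv n) (\<lambda>i. T (x i) k)"
  have "(\<Sum>y\<in>configs N K. \<bar>global_P N nv T1 x y - global_P N nv T2 x y\<bar>)
      \<le> (\<Sum>n\<in>{1..N}. \<Sum>k\<in>{1..K}. \<bar>?a T1 n k - ?a T2 n k\<bar>)"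
    unfolding global_P_eq_prod_avg configs_def
    using avg_row_stochastic[OF N T1 x] avg_row_stochastic[OF N T2 x]
    by (intro sum_abs_prod_diff_PiE_le) auto
  also have "\<dots> \<le> (\<Sum>n\<in>{1..N}. avg (cyc_nbhd N nv n) (\<lambda>i. \<Sum>k\<in>{1..K}. \<bar>T1 (x i) k - T2 (x i) k\<bar>))"
    unfolding avg_diff sum_avg[symmetric] by (intro sum_mono abs_avg_le)
  finally show ?thesis .
qed

lemma ent_norm1_global_P_diff_le:
  assumes N: "1 \<le> N" and T1: "row_stochastic {1..K} T1" and T2: "row_stochastic {1..K} T2"
  shows "ent_norm1 (configs N K) (\<lambda>x y. global_P N nv T1 x y - global_P N nv T2 x y)
    \<le> real N * real K ^ (N - 1) * ent_norm1 {1..K} (\<lambda>i j. T1 i j - T2 i j)"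
proof -
  have "ent_norm1 (configs N K) (\<lambda>x y. global_P N nv T1 x y - global_P N nv T2 x y)
      \<le> (\<Sum>x\<in>configs N K. \<Sum>n\<in>{1..N}.
           avg (cyc_nbhd N nv n) (\<lambda>i. \<Sum>k\<in>{1..K}. \<bar>T1 (x i) k - T2 (x i) k\<bar>))"
    unfolding ent_norm1_def by (intro sum_mono sum_abs_global_P_diff_le[OF N T1 T2])
  also have "\<dots> = real N * real K ^ (N - 1) * ent_norm1 {1..K} (\<lambda>i j. T1 i j - T2 i j)"
    unfolding ent_norm1_def by (rule sum_configs_avg_cyc_nbhd[OF N])
  finally show ?thesis .
qed

lemma sum_sq_avg_row_le:
  assumes N: "1 \<le> N" and x: "x \<in> configs N K" and n: "n \<in> {1..N}"
    and T: "\<And>j. j \<in> {1..K} \<Longrightarrow> (\<Sum>k\<in>{1..K}. (T j k)\<^sup>2) \<le> C"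
  shows "(\<Sum>k\<in>{1..K}. (avg (cyc_nbhd N nv n) (\<lambda>i. T (x i) k))\<^sup>2) \<le> C"
proof -
  have "(\<Sum>k\<in>{1..K}. (avg (cyc_nbhd N nv n) (\<lambda>i. T (x i) k))\<^sup>2)
      \<le> avg (cyc_nbhd N nv n) (\<lambda>i. \<Sum>k\<in>{1..K}. (T (x i) k)\<^sup>2)"
    unfolding sum_avg[symmetric] by (intro sum_mono sq_avg_le)
  also have "\<dots> \<le> avg (cyc_nbhd N nv n) (\<lambda>_. C)"
    using T configs_in_cyc_nbhd[OF N x] by (intro avg_mono) blast
  also have "\<dots> = C" using cyc_nbhd_self[OF n] by (intro avg_const finite_cyc_nbhd) blast
  finally show ?thesis .
qed

lemma sum_sq_global_P_diff_le:
  assumes N: "1 \<le> N"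
    and C1: "\<And>j. j \<in> {1..K} \<Longrightarrow> (\<Sum>k\<in>{1..K}. (T1 j k)\<^sup>2) \<le> C"
    and C2: "\<And>j. j \<in> {1..K} \<Longrightarrow> (\<Sum>k\<in>{1..K}. (T2 j k)\<^sup>2) \<le> C"
    and C: "0 \<le> C" and x: "x \<in> configs N K"
  shows "C * (\<Sum>y\<in>configs N K. (global_P N nv T1 x y - global_P N nv T2 x y)\<^sup>2)
    \<le> C ^ N * real N * (\<Sum>n\<in>{1..N}. avg (cyc_nbhd N nv n) (\<lambda>i. \<Sum>k\<in>{1..K}. (T1 (x i) k - T2 (x i) k)\<^sup>2))"
proof -
  let ?a = "\<lambda>T n k. avg (cyc_nbhd N nv n) (\<lambda>i. T (x i) k)"
  let ?\<delta> = "\<lambda>n. L2_set (\<lambda>k. ?a T1 n k - ?a T2 n k) {1..K}"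
  have "L2_set (?a T1 n) {1..K} \<le> sqrt C" "L2_set (?a T2 n) {1..K} \<le> sqrt C"
    if "n \<in> {1..N}" for n
    unfolding L2_set_def
    using sum_sq_avg_row_le[where T=T1, OF N x that C1] sum_sq_avg_row_le[where T=T2, OF N x that C2]
    by simp_all
  then have L2_bound: "sqrt C * L2_set (\<lambda>y. global_P N nv T1 x y - global_P N nv T2 x y) (configs N K)
      \<le> sqrt C ^ N * (\<Sum>n\<in>{1..N}. ?\<delta> n)"
    unfolding global_P_eq_prod_avg configs_def
    using L2_set_prod_diff_PiE_le[of "{1..N}" "{1..K}" "sqrt C" "?a T1" "?a T2"] C by simp
  have "(sqrt C ^ N)\<^sup>2 = (sqrt C ^ 2) ^ N" by (simp only: power_mult[symmetric] mult.commute)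
  then have sqrt_pow: "(sqrt C ^ N)\<^sup>2 = C ^ N" using C by simp
  have "C * (\<Sum>y\<in>configs N K. (global_P N nv T1 x y - global_P N nv T2 x y)\<^sup>2)
      = (sqrt C * L2_set (\<lambda>y. global_P N nv T1 x y - global_P N nv T2 x y) (configs N K))\<^sup>2"
    using C by (simp add: L2_set_def power_mult_distrib sum_nonneg)
  also have "\<dots> \<le> (sqrt C ^ N * (\<Sum>n\<in>{1..N}. ?\<delta> n))\<^sup>2"
    using L2_bound C by (intro power_mono) auto
  also have "\<dots> = C ^ N * (\<Sum>n\<in>{1..N}. ?\<delta> n)\<^sup>2"
    by (simp only: power_mult_distrib sqrt_pow)
  also have "\<dots> \<le> C ^ N * (real N * (\<Sum>n\<in>{1..N}. (?\<delta> n)\<^sup>2))"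
    using sum_squared_le_sum_of_squares[of ?\<delta> "{1..N}"] C by (simp add: mult_left_mono mult.commute)
  also have "\<dots> \<le> C ^ N * real N * (\<Sum>n\<in>{1..N}. avg (cyc_nbhd N nv n) (\<lambda>i. \<Sum>k\<in>{1..K}. (T1 (x i) k - T2 (x i) k)\<^sup>2))"
    unfolding L2_set_def avg_diff sum_avg[symmetric] using C
    by (simp add: mult.assoc sum_nonneg mult_left_mono sum_mono sq_avg_le)
  finally show ?thesis .
qed

lemma ent_norm2_global_P_diff_sq_le:
  assumes N: "1 \<le> N"
    and C1: "\<And>j. j \<in> {1..K} \<Longrightarrow> (\<Sum>k\<in>{1..K}. (T1 j k)\<^sup>2) \<le> C"
    and C2: "\<And>j. j \<in> {1..K} \<Longrightarrow> (\<Sum>k\<in>{1..K}. (T2 j k)\<^sup>2) \<le> C"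
    and C: "0 < C"
  shows "(ent_norm2 (configs N K) (\<lambda>x y. global_P N nv T1 x y - global_P N nv T2 x y))\<^sup>2
    \<le> (real N)\<^sup>2 * (real K * C) ^ (N - 1) * (ent_norm2 {1..K} (\<lambda>i j. T1 i j - T2 i j))\<^sup>2"
proof -
  let ?D2 = "\<Sum>i\<in>{1..K}. \<Sum>j\<in>{1..K}. (T1 i j - T2 i j)\<^sup>2"
  have "C * (\<Sum>x\<in>configs N K. \<Sum>y\<in>configs N K. (global_P N nv T1 x y - global_P N nv T2 x y)\<^sup>2)
      = (\<Sum>x\<in>configs N K. C * (\<Sum>y\<in>configs N K. (global_P N nv T1 x y - global_P N nv T2 x y)\<^sup>2))"
    by (rule sum_distrib_left)
  also have "\<dots> \<le> (\<Sum>x\<in>configs N K. C ^ N * real N * (\<Sum>n\<in>{1..N}.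
           avg (cyc_nbhd N nv n) (\<lambda>i. \<Sum>k\<in>{1..K}. (T1 (x i) k - T2 (x i) k)\<^sup>2)))"
    using C by (intro sum_mono sum_sq_global_P_diff_le[OF N C1 C2]) auto
  also have "\<dots> = C ^ N * real N * (\<Sum>x\<in>configs N K. \<Sum>n\<in>{1..N}.
           avg (cyc_nbhd N nv n) (\<lambda>i. \<Sum>k\<in>{1..K}. (T1 (x i) k - T2 (x i) k)\<^sup>2))"
    by (simp add: sum_distrib_left)
  also have "\<dots> = C ^ N * real N * (real N * real K ^ (N - 1) * ?D2)"
    using sum_configs_avg_cyc_nbhd[OF N, of nv "\<lambda>j. \<Sum>k\<in>{1..K}. (T1 j k - T2 j k)\<^sup>2"] by simp
  also have "\<dots> = C * ((real N)\<^sup>2 * (real K * C) ^ (N - 1) * ?D2)"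
    using N by (cases N) (simp_all add: power2_eq_square power_mult_distrib mult_ac)
  finally show ?thesis using C unfolding ent_norm2_def by (simp add: sum_nonneg)
qed

lemma ent_norm2_global_P_diff_le:
  assumes N: "1 \<le> N" and K: "1 \<le> K" and T1: "row_stochastic {1..K} T1"
    and C1: "\<And>j. j \<in> {1..K} \<Longrightarrow> (\<Sum>k\<in>{1..K}. (T1 j k)\<^sup>2) \<le> C"
    and C2: "\<And>j. j \<in> {1..K} \<Longrightarrow> (\<Sum>k\<in>{1..K}. (T2 j k)\<^sup>2) \<le> C"
  shows "ent_norm2 (configs N K) (\<lambda>x y. global_P N nv T1 x y - global_P N nv T2 x y)
    \<le> real N * (real K * C) powr (real N / 2) * ent_norm2 {1..K} (\<lambda>i j. T1 i j - T2 i j)"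
proof -
  have "1 \<le> real K * (\<Sum>k\<in>{1..K}. (T1 1 k)\<^sup>2)"
    using row_stochastic_card_mult_sum_sq_ge_1[OF T1, of 1] K by simp
  also have "\<dots> \<le> real K * C" using C1[of 1] K by (intro mult_left_mono) auto
  finally have KC: "1 \<le> real K * C" .
  then have "0 < C" by (smt (verit) mult_nonneg_nonpos of_nat_0_le_iff)
  have "(real K * C) ^ (N - 1) \<le> (real K * C) ^ N" using KC by (intro power_increasing) auto
  also have "\<dots> = ((real K * C) powr (real N / 2))\<^sup>2"
    using KC by (simp add: power2_eq_square powr_realpow[symmetric] flip: powr_add)
  finally have KC_pow: "(real K * C) ^ (N - 1) \<le> ((real K * C) powr (real N / 2))\<^sup>2" .
  have "(ent_norm2 (configs N K) (\<lambda>x y. global_P N nv T1 x y - global_P N nv T2 x y))\<^sup>2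
      \<le> (real N)\<^sup>2 * (real K * C) ^ (N - 1) * (ent_norm2 {1..K} (\<lambda>i j. T1 i j - T2 i j))\<^sup>2"
    by (rule ent_norm2_global_P_diff_sq_le[OF N C1 C2 \<open>0 < C\<close>])
  also have "\<dots> \<le> (real N * (real K * C) powr (real N / 2) * ent_norm2 {1..K} (\<lambda>i j. T1 i j - T2 i j))\<^sup>2"
    using KC_pow by (simp add: power_mult_distrib mult_left_mono mult_right_mono)
  finally show ?thesis by (rule power2_le_imp_le) (simp add: ent_norm2_def sum_nonneg)
qed

lemma global_P_pos:
  assumes N: "1 \<le> N" and T: "row_stochastic {1..K} T" and z: "z \<in> configs N K" and y: "y \<in> configs N K"
    and pos: "\<And>n. n \<in> {1..N} \<Longrightarrow> 0 < T (z n) (y n)"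
  shows "0 < global_P N nv T z y"
  unfolding global_P_eq_prod_avg
proof (rule prod_pos)
  fix n assume n: "n \<in> {1..N}"
  have "0 < T (z n) (y n)" by (rule pos[OF n])
  also have "\<dots> \<le> (\<Sum>i\<in>cyc_nbhd N nv n. T (z i) (y n))"
    using T configs_in_cyc_nbhd[OF N z] cyc_nbhd_self[OF n] configs_in[OF y n]
    unfolding row_stochastic_def by (intro member_le_sum finite_cyc_nbhd) auto
  moreover have "0 < card (cyc_nbhd N nv n)"
    using cyc_nbhd_self[OF n, of nv] finite_cyc_nbhd[of N nv n] by (auto simp: card_gt_0_iff)
  ultimately show "0 < avg (cyc_nbhd N nv n) (\<lambda>i. T (z i) (y n))" by (simp add: avg_def)
qed

lemma matpow_global_P_pos:
  assumes N: "1 \<le> N" and T: "row_stochastic {1..K} T"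
    and x: "x \<in> configs N K" and y: "y \<in> configs N K"
    and pos: "\<And>n. n \<in> {1..N} \<Longrightarrow> 0 < matpow {1..K} T m (x n) (y n)"
  shows "0 < matpow (configs N K) (global_P N nv T) m x y"
  using y pos
proof (induction m arbitrary: y)
  case 0
  have "x n = y n" if "n \<in> {1..N}" for n using "0.prems"(2)[OF that] by (simp split: if_splits)
  then have "x = y" using x "0.prems"(1) unfolding configs_def by (intro PiE_ext) auto
  then show ?case by simp
next
  case (Suc m)
  have T_nonneg: "\<And>i j. i \<in> {1..K} \<Longrightarrow> j \<in> {1..K} \<Longrightarrow> 0 \<le> T i j"
    using T unfolding row_stochastic_def by blast
  have P_nonneg: "\<And>x y. x \<in> configs N K \<Longrightarrow> y \<in> configs N K \<Longrightarrow> 0 \<le> global_P N nv T x y"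
    using row_stochastic_global_P[OF N T] unfolding row_stochastic_def by blast
  have "\<forall>n\<in>{1..N}. \<exists>k. k \<in> {1..K} \<and> 0 < matpow {1..K} T m (x n) k \<and> 0 < T k (y n)"
  proof
    fix n assume n: "n \<in> {1..N}"
    show "\<exists>k. k \<in> {1..K} \<and> 0 < matpow {1..K} T m (x n) k \<and> 0 < T k (y n)"
      using Suc.prems(2)[OF n] matpow_Suc_pos_iff[of "{1..K}" T, OF _ T_nonneg configs_in[OF Suc.prems(1) n]]
      by auto
  qed
  from bchoice[OF this] obtain k where k: "\<forall>n\<in>{1..N}.
      k n \<in> {1..K} \<and> 0 < matpow {1..K} T m (x n) (k n) \<and> 0 < T (k n) (y n)"
    by blast
  define z where "z = restrict k {1..N}"
  have z: "z \<in> configs N K" unfolding z_def configs_def using k by auto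
  have zn: "z n = k n" if "n \<in> {1..N}" for n unfolding z_def using that by simp
  have "0 < matpow (configs N K) (global_P N nv T) m x z"
    using k by (intro Suc.IH[OF z]) (simp add: zn)
  moreover have "0 < global_P N nv T z y"
    using k by (intro global_P_pos[OF N T z Suc.prems(1)]) (simp add: zn)
  ultimately show ?case
    using matpow_Suc_pos_iff[of "configs N K" "global_P N nv T", OF finite_configs P_nonneg Suc.prems(1)] z
    by blast
qed

lemma dob_tau_matpow_global_P_less_1:
  assumes N: "1 \<le> N" and K: "1 \<le> K"
    and T: "row_stochastic {1..K} T" "irreducible_mat {1..K} T" "aperiodic_mat {1..K} T"
  shows "\<exists>l\<ge>1. dob_tau (configs N K) (matpow (configs N K) (global_P N nv T) l) < 1"
proof -
  obtain l where l: "1 \<le> l" and col: "\<And>i. i \<in> {1..K} \<Longrightarrow> 0 < matpow {1..K} T l i 1"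
    using matpow_column_pos[OF _ _ T(2,3), of 1] T(1) K unfolding row_stochastic_def by auto
  define y0 where "y0 = restrict (\<lambda>_. 1::nat) {1..N}"
  have y0: "y0 \<in> configs N K" unfolding y0_def configs_def using K by auto
  have "0 < matpow (configs N K) (global_P N nv T) l x y0" if "x \<in> configs N K" for x
    using matpow_global_P_pos[OF N T(1) that y0] col configs_in[OF that] unfolding y0_def by auto
  then have "dob_tau (configs N K) (matpow (configs N K) (global_P N nv T) l) < 1"
    using dob_tau_less_1[OF finite_configs row_stochastic_matpow[OF finite_configs row_stochastic_global_P[OF N T(1)]] y0]
    by blast
  then show ?thesis using l by blast
qed

theorem theorem3p5:
  fixes N K nv :: nat
    and T1 T2 :: "nat \<Rightarrow> nat \<Rightarrow> real"
    and pi1 pi2 :: "(nat \<Rightarrow> nat) \<Rightarrow> real"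
  assumes N: "N \<ge> 1" and K: "K \<ge> 1"
    and T1: "row_stochastic {1..K} T1" "irreducible_mat {1..K} T1" "aperiodic_mat {1..K} T1"
    and T2: "row_stochastic {1..K} T2" "irreducible_mat {1..K} T2" "aperiodic_mat {1..K} T2"
    and pi1: "stationary (configs N K) (global_P N nv T1) pi1"
    and pi2: "stationary (configs N K) (global_P N nv T2) pi2"
  defines "S \<equiv> configs N K"
    and "P1 \<equiv> global_P N nv T1"
    and "P2 \<equiv> global_P N nv T2"
    and "D \<equiv> (\<lambda>i j. T1 i j - T2 i j)"
    and "DP \<equiv> (\<lambda>x y. global_P N nv T1 x y - global_P N nv T2 x y)"
    and "CK \<equiv> max (Max ((\<lambda>j. \<Sum>k\<in>{1..K}. (T1 j k)\<^sup>2) ` {1..K}))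
                   (Max ((\<lambda>j. \<Sum>k\<in>{1..K}. (T2 j k)\<^sup>2) ` {1..K}))"
    and "B \<equiv> real N * real K ^ (N - 1) *
               min (ent_norm1 {1..K} (\<lambda>i j. T1 i j - T2 i j))
                   (real K * norm11 {1..K} (\<lambda>i j. T1 i j - T2 i j))"
  shows "ent_norm1 S DP \<le> B
    \<and> CK \<le> 1
    \<and> ent_norm2 S DP \<le> real N * (real K * CK) powr (real N / 2) * ent_norm2 {1..K} D
    \<and> (\<exists>l0::nat. l0 \<ge> 1 \<and> dob_tau S (matpow S P1 l0) < 1
         \<and> vec_norm1 S (\<lambda>x. pi1 x - pi2 x)
             \<le> (1 + (real l0 - 1) * real K ^ N) / (1 - dob_tau S (matpow S P1 l0)) * ent_norm1 S DP
         \<and> (1 + (real l0 - 1) * real K ^ N) / (1 - dob_tau S (matpow S P1 l0)) * ent_norm1 S DP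
             \<le> (1 + (real l0 - 1) * real K ^ N) / (1 - dob_tau S (matpow S P1 l0)) * B)"
proof -
  have fin: "finite S" unfolding S_def by (rule finite_configs)
  have P1: "row_stochastic S P1" unfolding S_def P1_def by (rule row_stochastic_global_P[OF N T1(1)])
  (* the minimum in B is always attained by the entrywise norm *)
  have "ent_norm1 {1..K} D \<le> real K * norm11 {1..K} D"
    using ent_norm1_le_card_norm11[of "{1..K}" D] by simp
  then have DP_le_B: "ent_norm1 S DP \<le> B"
    using ent_norm1_global_P_diff_le[OF N T1(1) T2(1), of nv]
    unfolding B_def S_def DP_def D_def by (simp add: min_absorb1)
  have CK_le_1: "CK \<le> 1"
    unfolding CK_def using K row_stochastic_sum_sq_le_1[OF T1(1)] row_stochastic_sum_sq_le_1[OF T2(1)]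
    by (simp add: Max_le_iff)
  have rows1: "(\<Sum>k\<in>{1..K}. (T1 j k)\<^sup>2) \<le> CK" and rows2: "(\<Sum>k\<in>{1..K}. (T2 j k)\<^sup>2) \<le> CK"
    if "j \<in> {1..K}" for j
    unfolding CK_def using that by (auto intro: max.coboundedI1 max.coboundedI2 Max_ge)
  have DP_L2: "ent_norm2 S DP \<le> real N * (real K * CK) powr (real N / 2) * ent_norm2 {1..K} D"
    unfolding S_def DP_def D_def by (rule ent_norm2_global_P_diff_le[OF N K T1(1) rows1 rows2])
  obtain l where l: "1 \<le> l" and tau: "dob_tau S (matpow S P1 l) < 1"
    using dob_tau_matpow_global_P_less_1[OF N K T1] unfolding S_def P1_def by blast
  let ?c = "(1 + (real l - 1) * real K ^ N) / (1 - dob_tau S (matpow S P1 l))"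
  have "(real l - 1) * 1 \<le> (real l - 1) * real K ^ N"
    using l K by (intro mult_left_mono one_le_power) auto
  then have "real l / (1 - dob_tau S (matpow S P1 l)) \<le> ?c"
    using tau by (intro divide_right_mono) auto
  then have "real l / (1 - dob_tau S (matpow S P1 l)) * ent_norm1 S DP \<le> ?c * ent_norm1 S DP"
    by (rule mult_right_mono) (simp add: ent_norm1_def sum_nonneg)
  then have "real l * ent_norm1 S DP / (1 - dob_tau S (matpow S P1 l)) \<le> ?c * ent_norm1 S DP"
    by simp
  moreover have "vec_norm1 S (\<lambda>x. pi1 x - pi2 x) \<le> real l * ent_norm1 S DP / (1 - dob_tau S (matpow S P1 l))"
    using vec_norm1_stationary_diff_le[OF fin P1 _ _ tau] pi1 pi2 unfolding S_def P1_def DP_def by blast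
  moreover have "?c * ent_norm1 S DP \<le> ?c * B"
    using DP_le_B l tau K by (intro mult_left_mono) auto
  ultimately show ?thesis using DP_le_B CK_le_1 DP_L2 l tau by (intro conjI exI[of _ l]) auto
qed

end
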